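(* Let $t=(t_1,\dots,t_n)$ be nonnegative reals and $D_1,\dots,D_n\in\mathcal{H}_d$ positive semidefinite. Then for any $T_1\ge|t|_1$ and any $T_\infty>0$ with $T_\infty\ge|t|_\infty$, \[ \Big\|\sum_{i=1}^nt_iD_i\Big\|\le T_\infty\cdot\sup\Big\{\Big\|\sum_{i\in\mathcal{I}}D_i\Big\|:\ \mathcal{I}\subset[n],\ |\mathcal{I}|\le\lceil T_1/T_\infty\rceil\Big\}. \]
   Context: $\mathcal{H}_d$ is the space of $d\times d$ Hermitian matrices, $\|\cdot\|$ the operator norm, $|t|_1=\sum_i|t_i|$, $|t|_\infty=\max_i|t_i|$. *)

theory Defs
  imports "HOL-Analysis.Analysis"
begin

definition hermitian :: "complex^'d^'d \<Rightarrow> bool" where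
  "hermitian A \<longleftrightarrow> (\<forall>i j. A $ i $ j = cnj (A $ j $ i))"

definition psd :: "complex^'d^'d \<Rightarrow> bool" where
  "psd A \<longleftrightarrow> hermitian A \<and>
     (\<forall>x :: complex^'d. 0 \<le> Re (\<Sum>i\<in>UNIV. cnj (x $ i) * (A *v x) $ i))"

text \<open>Operator norm w.r.t. the Euclidean (l2) norm on complex^'d.\<close>
definition opnorm :: "complex^'d^'d \<Rightarrow> real" where
  "opnorm A = onorm (\<lambda>x :: complex^'d. A *v x)"

end

theory Submission
  imports Defs
begin

text \<open>Dividing by \<open>T\<^sub>\<infinity>\<close>, the weights \<open>s\<^sub>i = t\<^sub>i / T\<^sub>\<infinity>\<close> lie in the polytope
  \<open>P = {s. 0 \<le> s\<^sub>i \<le> 1, \<Sum>s\<^sub>i \<le> K}\<close> with \<open>K = \<lceil>T\<^sub>1 / T\<^sub>\<infinity>\<rceil>\<close>. Since \<open>K\<close> is an integer, every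
  point of \<open>P\<close> is a convex combination of 0-1 vectors with at most \<open>K\<close> ones: a point with a
  single fractional coordinate is rounded up and down, and a point with two fractional
  coordinates is moved along the direction \<open>e\<^sub>i - e\<^sub>j\<close> until one of them becomes integral. Hence
  \<open>\<Sum>\<^sub>i s\<^sub>iD\<^sub>i\<close> lies in the convex hull of the partial sums \<open>\<Sum>\<^sub>i\<^sub>\<in>\<^sub>I D\<^sub>i\<close> with \<open>|I| \<le> K\<close>, and the
  convex operator norm is bounded there by its maximum on these partial sums.\<close>

definition capped_weights :: "nat \<Rightarrow> nat \<Rightarrow> (nat \<Rightarrow> real) \<Rightarrow> bool" where
  "capped_weights n K s \<longleftrightarrow> (\<forall>i<n. 0 \<le> s i \<and> s i \<le> 1) \<and> (\<Sum>i<n. s i) \<le> real K"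

definition fractional_coords :: "nat \<Rightarrow> (nat \<Rightarrow> real) \<Rightarrow> nat set" where
  "fractional_coords n s = {i. i < n \<and> 0 < s i \<and> s i < 1}"

lemma finite_fractional_coords [simp]: "finite (fractional_coords n s)"
  unfolding fractional_coords_def by auto

lemma sum_fun_upd_lessThan:
  fixes f :: "nat \<Rightarrow> 'a::ab_group_add"
  assumes "i < n"
  shows "(\<Sum>k<n. (f(i := x)) k) = (\<Sum>k<n. f k) - f i + x"
proof -
  have "(\<Sum>k\<in>{..<n} - {i}. (f(i := x)) k) = (\<Sum>k\<in>{..<n} - {i}. f k)"
    by (intro sum.cong) auto
  then show ?thesis
    using assms by (simp add: sum.remove[of "{..<n}" i])
qed

lemma sum_scaleR_01_weights:
  fixes v :: "nat \<Rightarrow> 'a::real_vector"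
  assumes "\<forall>i<n. s i = 0 \<or> s i = 1"
  shows "(\<Sum>i<n. s i *\<^sub>R v i) = (\<Sum>i\<in>{i. i < n \<and> s i = 1}. v i)"
proof -
  have "(\<Sum>i<n. s i *\<^sub>R v i) = (\<Sum>i<n. if s i = 1 then v i else 0)"
    using assms by (intro sum.cong) auto
  also have "\<dots> = (\<Sum>i\<in>{i. i < n \<and> s i = 1}. v i)"
    by (simp add: sum.inter_filter[symmetric])
  finally show ?thesis .
qed

lemma sum_01_weights:
  fixes s :: "nat \<Rightarrow> real"
  assumes "\<forall>i<n. s i = 0 \<or> s i = 1"
  shows "(\<Sum>i<n. s i) = real (card {i. i < n \<and> s i = 1})"
  using sum_scaleR_01_weights[OF assms, of "\<lambda>_. 1 :: real"] by simp

lemma card_fractional_coords_less: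
  assumes "i \<in> fractional_coords n s" "j \<in> fractional_coords n s"
    and "\<forall>k. k \<noteq> i \<and> k \<noteq> j \<longrightarrow> s' k = s k"
    and "s' i \<in> {0, 1} \<or> s' j \<in> {0, 1}"
  shows "card (fractional_coords n s') < card (fractional_coords n s)"
proof (rule psubset_card_mono)
  have "fractional_coords n s' \<subseteq> fractional_coords n s"
    using assms unfolding fractional_coords_def by auto
  moreover have "i \<notin> fractional_coords n s' \<or> j \<notin> fractional_coords n s'"
    using assms(4) unfolding fractional_coords_def by auto
  ultimately show "fractional_coords n s' \<subset> fractional_coords n s"
    using assms(1,2) by auto
qed simp

lemma capped_weights_split_single:
  assumes s: "capped_weights n K s" and i: "fractional_coords n s = {i}"
  shows "capped_weights n K (s(i := 0))" "capped_weights n K (s(i := 1))"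
proof -
  have i_frac: "i < n" "0 < s i" "s i < 1"
    using i unfolding fractional_coords_def by auto
  have "\<forall>k<n. k \<noteq> i \<longrightarrow> s k = 0 \<or> s k = 1"
    using s i unfolding capped_weights_def fractional_coords_def by force
  then have "\<forall>k<n. (s(i := 0)) k = 0 \<or> (s(i := 0)) k = 1"
    by simp
  from sum_01_weights[OF this] obtain m :: nat where m: "(\<Sum>k<n. (s(i := 0)) k) = real m"
    by blast
  have "real m + s i \<le> real K"
    using s m sum_fun_upd_lessThan[OF i_frac(1), of s 0] by (simp add: capped_weights_def)
  then have "real m < real K"
    using i_frac(2) by linarith
  then have "real m + 1 \<le> real K"
    by simp
  then show "capped_weights n K (s(i := 0))" "capped_weights n K (s(i := 1))"
    using s m sum_fun_upd_lessThan[OF i_frac(1), of s] by (auto simp: capped_weights_def)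
qed

lemma capped_weights_transfer:
  assumes s: "capped_weights n K s" and ij: "i < n" "j < n" "i \<noteq> j"
    and "0 \<le> s i + \<delta>" "s i + \<delta> \<le> 1" "0 \<le> s j - \<delta>" "s j - \<delta> \<le> 1"
  shows "capped_weights n K (s(i := s i + \<delta>, j := s j - \<delta>))"
proof -
  have "(\<Sum>k<n. (s(i := s i + \<delta>, j := s j - \<delta>)) k) = (\<Sum>k<n. (s(i := s i + \<delta>)) k) - s j + (s j - \<delta>)"
    using sum_fun_upd_lessThan[OF ij(2), of "s(i := s i + \<delta>)"] ij(3) by simp
  also have "\<dots> = (\<Sum>k<n. s k)"
    using sum_fun_upd_lessThan[OF ij(1), of s] by simp
  finally have "(\<Sum>k<n. (s(i := s i + \<delta>, j := s j - \<delta>)) k) = (\<Sum>k<n. s k)" .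
  then show ?thesis
    using assms by (auto simp: capped_weights_def)
qed

lemma capped_weights_split:
  assumes s: "capped_weights n K s" and frac: "fractional_coords n s \<noteq> {}"
  obtains a s1 s2 where "0 \<le> a" "a \<le> 1" "\<forall>k<n. s k = a * s1 k + (1 - a) * s2 k"
    and "capped_weights n K s1" "capped_weights n K s2"
    and "card (fractional_coords n s1) < card (fractional_coords n s)"
    and "card (fractional_coords n s2) < card (fractional_coords n s)"
proof -
  obtain i where i: "i \<in> fractional_coords n s"
    using frac by blast
  then have i_frac: "i < n" "0 < s i" "s i < 1"
    unfolding fractional_coords_def by auto
  show ?thesis
  proof (cases "fractional_coords n s = {i}")
    case True
    have card_less: "card (fractional_coords n (s(i := x))) < card (fractional_coords n s)"
      if "x \<in> {0, 1}" for x
      using card_fractional_coords_less[OF i i] that by simp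
    have comb: "s k = s i * (s(i := 1)) k + (1 - s i) * (s(i := 0)) k" for k
      by (cases "k = i") (simp_all add: algebra_simps)
    show ?thesis
    proof (rule that[of "s i" "s(i := 1)" "s(i := 0)"])
      show "\<forall>k<n. s k = s i * (s(i := 1)) k + (1 - s i) * (s(i := 0)) k"
        using comb by blast
    qed (use i_frac card_less capped_weights_split_single[OF s True] in auto)
  next
    case False
    then obtain j where j: "j \<in> fractional_coords n s" "j \<noteq> i"
      using i by blast
    then have j_frac: "j < n" "0 < s j" "s j < 1"
      unfolding fractional_coords_def by auto
    \<comment> \<open>the largest steps along \<open>e\<^sub>i - e\<^sub>j\<close> and \<open>e\<^sub>j - e\<^sub>i\<close> that stay in the unit box\<close>
    define p where "p = min (1 - s i) (s j)"
    define q where "q = min (s i) (1 - s j)"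
    have pq: "0 < p" "0 < q"
      using i_frac j_frac by (auto simp: p_def q_def)
    define s1 where "s1 = s(i := s i + p, j := s j - p)"
    define s2 where "s2 = s(i := s i - q, j := s j + q)"
    have "capped_weights n K s1"
      unfolding s1_def using i_frac j_frac j(2)
      by (intro capped_weights_transfer[OF s]) (auto simp: p_def)
    moreover have "capped_weights n K s2"
      using capped_weights_transfer[OF s i_frac(1) j_frac(1) j(2)[symmetric], of "-q"]
        i_frac j_frac by (auto simp: s2_def q_def)
    moreover have "card (fractional_coords n s1) < card (fractional_coords n s)"
      using i j by (intro card_fractional_coords_less[OF i j(1)]) (auto simp: s1_def p_def min_def)
    moreover have "card (fractional_coords n s2) < card (fractional_coords n s)"
      using i j by (intro card_fractional_coords_less[OF i j(1)]) (auto simp: s2_def q_def min_def)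
    moreover have "\<forall>k<n. s k = q / (p + q) * s1 k + (1 - q / (p + q)) * s2 k"
    proof (intro allI impI)
      fix k
      have "q * s1 k + p * s2 k = (p + q) * s k"
        using j(2) by (cases "k = i"; cases "k = j") (simp_all add: s1_def s2_def algebra_simps)
      moreover have "p + q \<noteq> 0"
        using pq by simp
      ultimately show "s k = q / (p + q) * s1 k + (1 - q / (p + q)) * s2 k"
        by (simp add: divide_simps)
    qed
    moreover have "0 \<le> q / (p + q)" "q / (p + q) \<le> 1"
      using pq by auto
    ultimately show ?thesis
      by (intro that[of "q / (p + q)" s1 s2])
  qed
qed

lemma sum_scaleR_mem_convex_hull_subset_sums:
  fixes v :: "nat \<Rightarrow> 'a::real_vector"
  assumes "capped_weights n K s"
  shows "(\<Sum>i<n. s i *\<^sub>R v i) \<in> convex hull {\<Sum>i\<in>I. v i | I. I \<subseteq> {..<n} \<and> card I \<le> K}"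
  using assms
proof (induction "card (fractional_coords n s)" arbitrary: s rule: less_induct)
  case less
  show ?case
  proof (cases "fractional_coords n s = {}")
    case True
    then have s01: "\<forall>i<n. s i = 0 \<or> s i = 1"
      using less.prems unfolding capped_weights_def fractional_coords_def by force
    define I where "I = {i. i < n \<and> s i = 1}"
    have "card I \<le> K"
      using less.prems sum_01_weights[OF s01] by (simp add: capped_weights_def I_def)
    then have "(\<Sum>i\<in>I. v i) \<in> {\<Sum>i\<in>I. v i | I. I \<subseteq> {..<n} \<and> card I \<le> K}"
      by (auto simp: I_def)
    then show ?thesis
      unfolding sum_scaleR_01_weights[OF s01] I_def[symmetric] by (rule hull_inc)
  next
    case False
    then obtain a s1 s2 where a: "0 \<le> a" "a \<le> 1"
      and s: "\<forall>k<n. s k = a * s1 k + (1 - a) * s2 k"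
      and s1: "capped_weights n K s1" "card (fractional_coords n s1) < card (fractional_coords n s)"
      and s2: "capped_weights n K s2" "card (fractional_coords n s2) < card (fractional_coords n s)"
      by (rule capped_weights_split[OF less.prems])
    have "(\<Sum>i<n. s i *\<^sub>R v i) = (\<Sum>i<n. a *\<^sub>R (s1 i *\<^sub>R v i) + (1 - a) *\<^sub>R (s2 i *\<^sub>R v i))"
    proof (rule sum.cong)
      fix i
      assume "i \<in> {..<n}"
      then have "s i = a * s1 i + (1 - a) * s2 i"
        using s by simp
      then show "s i *\<^sub>R v i = a *\<^sub>R (s1 i *\<^sub>R v i) + (1 - a) *\<^sub>R (s2 i *\<^sub>R v i)"
        by (simp add: scaleR_add_left)
    qed simp
    also have "\<dots> = a *\<^sub>R (\<Sum>i<n. s1 i *\<^sub>R v i) + (1 - a) *\<^sub>R (\<Sum>i<n. s2 i *\<^sub>R v i)"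
      by (simp add: sum.distrib scaleR_sum_right)
    finally show ?thesis
      using convexD[OF convex_convex_hull less.hyps[OF s1(2) s1(1)] less.hyps[OF s2(2) s2(1)], of a "1 - a"] a
      by simp
  qed
qed

lemma convex_on_bound_capped_weights:
  fixes f :: "'a::real_vector \<Rightarrow> real" and v :: "nat \<Rightarrow> 'a"
  assumes f: "convex_on UNIV f"
    and M: "\<And>I. I \<subseteq> {..<n} \<Longrightarrow> card I \<le> K \<Longrightarrow> f (\<Sum>i\<in>I. v i) \<le> M"
    and s: "capped_weights n K s"
  shows "f (\<Sum>i<n. s i *\<^sub>R v i) \<le> M"
proof -
  let ?S = "{\<Sum>i\<in>I. v i | I. I \<subseteq> {..<n} \<and> card I \<le> K}"
  have "convex_on (convex hull ?S) f"
    using f by (rule convex_on_subset) auto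
  then show ?thesis
    using convex_on_convex_hull_bound M sum_scaleR_mem_convex_hull_subset_sums[OF s] by blast
qed

lemma scaleR_matrix_vector_mult: "(c *\<^sub>R A) *v x = c *\<^sub>R (A *v x)"
  for A :: "'a::real_algebra_1^'n^'m"
  by (simp add: vec_eq_iff matrix_vector_mult_def scaleR_sum_right)

lemma opnorm_triangle: "opnorm (A + B) \<le> opnorm A + opnorm B"
  unfolding opnorm_def matrix_vector_mult_add_rdistrib
  by (rule onorm_triangle) auto

lemma opnorm_scaleR: "0 \<le> c \<Longrightarrow> opnorm (c *\<^sub>R A) = c * opnorm A"
  unfolding opnorm_def scaleR_matrix_vector_mult
  by (subst onorm_scaleR) auto

lemma convex_on_opnorm: "convex_on UNIV opnorm"
proof (rule convex_onI)
  fix t :: real and A B :: "complex^'d^'d"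
  assume "0 < t" "t < 1"
  then show "opnorm ((1 - t) *\<^sub>R A + t *\<^sub>R B) \<le> (1 - t) * opnorm A + t * opnorm B"
    using opnorm_triangle[of "(1 - t) *\<^sub>R A" "t *\<^sub>R B"] by (simp add: opnorm_scaleR)
qed simp

theorem lemma6p1:
  fixes n :: nat and t :: "nat \<Rightarrow> real" and D :: "nat \<Rightarrow> complex^'d^'d"
    and T1 Tinf :: real
  assumes t_nonneg: "\<forall>i<n. 0 \<le> t i"
    and D_psd: "\<forall>i<n. psd (D i)"
    and T1: "(\<Sum>i<n. \<bar>t i\<bar>) \<le> T1"
    and Tinf_pos: "0 < Tinf"
    and Tinf: "\<forall>i<n. \<bar>t i\<bar> \<le> Tinf"
  shows "opnorm (\<Sum>i<n. t i *\<^sub>R D i) \<le>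
    Tinf * Sup {opnorm (\<Sum>i\<in>I. D i) | I. I \<subseteq> {..<n} \<and> real (card I) \<le> of_int \<lceil>T1 / Tinf\<rceil>}"
proof -
  define S where "S = {opnorm (\<Sum>i\<in>I. D i) | I. I \<subseteq> {..<n} \<and> real (card I) \<le> of_int \<lceil>T1 / Tinf\<rceil>}"
  define K where "K = nat \<lceil>T1 / Tinf\<rceil>"
  have "0 \<le> T1"
    using T1 by (meson abs_ge_zero order_trans sum_nonneg)
  then have K: "real K = of_int \<lceil>T1 / Tinf\<rceil>"
    using Tinf_pos by (simp add: K_def)
  have "finite S"
    unfolding S_def by (rule finite_subset[of _ "(\<lambda>I. opnorm (\<Sum>i\<in>I. D i)) ` Pow {..<n}"]) auto
  then have vertex_bound: "opnorm (\<Sum>i\<in>I. D i) \<le> Sup S" if "I \<subseteq> {..<n}" "card I \<le> K" for I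
    using that K by (intro cSup_upper) (auto simp: S_def)
  have "(\<Sum>i<n. t i / Tinf) \<le> T1 / Tinf"
    using t_nonneg T1 Tinf_pos by (simp add: divide_right_mono flip: sum_divide_distrib)
  then have "capped_weights n K (\<lambda>i. t i / Tinf)"
    using t_nonneg Tinf Tinf_pos K by (auto simp: capped_weights_def) linarith
  then have "opnorm (\<Sum>i<n. (t i / Tinf) *\<^sub>R D i) \<le> Sup S"
    using convex_on_bound_capped_weights[OF convex_on_opnorm vertex_bound] by simp
  moreover have "(\<Sum>i<n. t i *\<^sub>R D i) = Tinf *\<^sub>R (\<Sum>i<n. (t i / Tinf) *\<^sub>R D i)"
    using Tinf_pos by (simp add: scaleR_sum_right)
  ultimately show ?thesis
    using Tinf_pos by (simp add: opnorm_scaleR S_def)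
qed

end
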